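(* Let $(x_n,y_m)$ and $(\tilde x_n,\tilde y_m)$ be two pairs of slightly perturbed increasing arithmetic progressions, $x_n=\alpha n+\beta+o(1)$, $y_m=\gamma m+\delta+o(1)$, $\tilde x_n=\tilde\alpha n+\tilde\beta+o(1)$, $\tilde y_m=\tilde\gamma m+\tilde\delta+o(1)$, with irrational relative densities $\alpha/\gamma$ and $\tilde\alpha/\tilde\gamma$. If the two pairs are topologically equivalent at $+\infty$, then $\alpha/\gamma=\tilde\alpha/\tilde\gamma$, and $\frac{\beta-\delta}{\gamma}-\frac{\tilde\beta-\tilde\delta}{\tilde\gamma}$ lies in the additive subgroup of $\mathbb R$ generated by $1$ and $\alpha/\gamma$.
   Context: A slightly perturbed arithmetic progression is a sequence of the form $x_n=An+\tau+o(1)$, $n\to+\infty$. For a pair $(\alpha n+\beta+o(1),\ \gamma m+\delta+o(1))$ the relative density is $\alpha/\gamma$ and the normalized difference of free terms is $(\beta-\delta)/\gamma$. Two pairs of sequences on the line are topologically equivalent at $+\infty$ if there is a homeomorphism of the line defined in a neighborhood of $+\infty$ mapping the first sequence of the first pair to the first sequence of the second pair and the second to the second. *)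

theory Defs
  imports "HOL-Analysis.Analysis"
begin

definition perturbed_AP :: "(nat \<Rightarrow> real) \<Rightarrow> real \<Rightarrow> real \<Rightarrow> bool" where
  "perturbed_AP x A tau \<longleftrightarrow> (\<lambda>n. x n - (A * real n + tau)) \<longlonglongrightarrow> 0"

definition top_equiv_at_top ::
  "(nat \<Rightarrow> real) \<Rightarrow> (nat \<Rightarrow> real) \<Rightarrow> (nat \<Rightarrow> real) \<Rightarrow> (nat \<Rightarrow> real) \<Rightarrow> bool" where
  "top_equiv_at_top x y x' y' \<longleftrightarrow>
     (\<exists>a b h g. homeomorphism {a<..} {b<..} h g \<and>
        h ` ({a<..} \<inter> range x) = {b<..} \<inter> range x' \<and>
        h ` ({a<..} \<inter> range y) = {b<..} \<inter> range y')"

definition subgroup_gen_1 :: "real \<Rightarrow> real set" where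
  "subgroup_gen_1 \<theta> = {of_int k + of_int l * \<theta> | k l. True}"

end

theory Submission
  imports Defs
begin

text \<open>A homeomorphism h of neighbourhoods of +\<infinity> carrying one pair onto the other is strictly
  monotone, and it cannot be decreasing: it would then send the infinitely many terms x_n above some
  point into the finitely many terms of x' below a fixed bound. Both sequences are eventually
  increasing with no other term between consecutive ones, so an increasing h matches a tail of x with
  a tail of x' and a tail of y with a tail of y', up to index shifts i, j, k, l. Since h preserves
  order, x_(i+n) - y_(k+m) and x'_(j+n) - y'_(l+m) never have opposite signs. After division by
  \<gamma> and \<gamma>' these differences are \<theta> n - m + c + o(1) and \<theta>' n - m + c' + o(1). As \<theta> is
  irrational, \<theta> n - m can be placed near any prescribed value with n, m large, and if
  (\<theta>', c') \<noteq> (\<theta>, c) this forces opposite signs. So \<theta>' = \<theta> and c' = c, and unwinding c, c'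
  shows that the normalized offsets differ by (k - l) + (j - i) \<theta>.\<close>

definition succ_is_next :: "(nat \<Rightarrow> 'a::linorder) \<Rightarrow> nat \<Rightarrow> bool" where
  "succ_is_next x n \<longleftrightarrow> x n < x (Suc n) \<and> (\<forall>k. x n < x k \<longrightarrow> x (Suc n) \<le> x k)"

lemma eventually_sequentially_imp_above:
  fixes x :: "nat \<Rightarrow> 'a::linorder"
  assumes "\<forall>\<^sub>F n in sequentially. P n"
  obtains C where "\<And>n. C < x n \<Longrightarrow> P n"
proof -
  obtain N where N: "\<And>n. N \<le> n \<Longrightarrow> P n"
    using assms by (auto simp: eventually_sequentially)
  have "P n" if "Max (x ` {..N}) < x n" for n
  proof (rule N, rule ccontr)
    assume "\<not> N \<le> n"
    then have "x n \<le> Max (x ` {..N})" by (intro Max_ge) auto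
    with that show False by (simp add: leD)
  qed
  then show thesis by (rule that)
qed

lemma perturbed_AP_tendsto_at_top:
  assumes "perturbed_AP x \<alpha> \<beta>" "\<alpha> > 0"
  shows "filterlim x at_top sequentially"
proof -
  have "filterlim (\<lambda>n. \<alpha> * real n) at_top sequentially"
    by (rule filterlim_tendsto_pos_mult_at_top[OF tendsto_const assms(2) filterlim_real_sequentially])
  moreover have "(\<lambda>n. x n - (\<alpha> * real n + \<beta>) + \<beta>) \<longlonglongrightarrow> 0 + \<beta>"
    using assms(1) unfolding perturbed_AP_def by (intro tendsto_add tendsto_const)
  ultimately have "filterlim (\<lambda>n. (x n - (\<alpha> * real n + \<beta>) + \<beta>) + \<alpha> * real n) at_top sequentially"
    by (intro filterlim_tendsto_add_at_top)
  then show ?thesis by simp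
qed

lemma perturbed_AP_shift:
  assumes "perturbed_AP x \<alpha> \<beta>"
  shows "perturbed_AP (\<lambda>n. x (i + n)) \<alpha> (\<alpha> * real i + \<beta>)"
proof -
  have "(\<lambda>n. x (n + i) - (\<alpha> * real (n + i) + \<beta>)) \<longlonglongrightarrow> 0"
    using assms unfolding perturbed_AP_def by (rule LIMSEQ_ignore_initial_segment)
  then show ?thesis
    unfolding perturbed_AP_def by (simp add: algebra_simps)
qed

lemma perturbed_AP_eventually_succ_is_next:
  assumes x: "perturbed_AP x \<alpha> \<beta>" and "\<alpha> > 0"
  shows "\<forall>\<^sub>F n in sequentially. succ_is_next x n"
proof -
  define close where "close n \<longleftrightarrow> \<bar>x n - (\<alpha> * real n + \<beta>)\<bar> < \<alpha> / 4" for n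
  have ev_close: "\<forall>\<^sub>F n in sequentially. close n"
    using tendstoD[OF x[unfolded perturbed_AP_def], of "\<alpha> / 4"] \<open>\<alpha> > 0\<close>
    by (simp add: close_def dist_real_def)
  obtain C where C: "\<And>k. C < x k \<Longrightarrow> close k"
    using eventually_sequentially_imp_above[OF ev_close, where x = x] by metis
  have "\<forall>\<^sub>F n in sequentially. close n \<and> close (Suc n) \<and> C < x n"
    using perturbed_AP_tendsto_at_top[OF assms, unfolded filterlim_at_top_dense]
    by (intro eventually_conj ev_close eventually_sequentially_Suc[THEN iffD2]) auto
  then show ?thesis
  proof eventually_elim
    case (elim n)
    have slope: "\<alpha> * (real k - real l) < x k - x l + \<alpha> / 2"
      "x k - x l - \<alpha> / 2 < \<alpha> * (real k - real l)" if "close k" "close l" for k l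
      using that unfolding close_def abs_less_iff right_diff_distrib by linarith+
    show ?case unfolding succ_is_next_def
    proof (intro conjI allI impI)
      show "x n < x (Suc n)" using slope(1)[of "Suc n" n] elim \<open>\<alpha> > 0\<close> by simp
    next
      fix k assume "x n < x k"
      with elim C have close_k: "close k" by auto
      have "\<alpha> * (-1 / 2) < \<alpha> * (real k - real n)"
        using slope(2)[OF close_k, of n] elim \<open>x n < x k\<close> by simp
      then have "-1 / 2 < real k - real n"
        using \<open>\<alpha> > 0\<close> by (simp only: mult_less_cancel_left_pos)
      then have "n \<le> k" by linarith
      then consider "k = n" | "k = Suc n" | "Suc (Suc n) \<le> k" by linarith
      then show "x (Suc n) \<le> x k"
      proof cases
        case 3
        then have "\<alpha> * 1 \<le> \<alpha> * (real k - real (Suc n))"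
          using \<open>\<alpha> > 0\<close> by (intro mult_left_mono) auto
        then show ?thesis using slope(1)[OF close_k, of "Suc n"] elim \<open>\<alpha> > 0\<close> by linarith
      qed (use \<open>x n < x k\<close> in auto)
    qed
  qed
qed

lemma perturbed_AP_difference_tendsto:
  assumes x: "perturbed_AP x \<alpha> \<beta>" and y: "perturbed_AP y \<gamma> \<delta>" and "\<gamma> \<noteq> 0"
  shows "((\<lambda>(n, m). (x n - y m) / \<gamma> - (\<alpha> / \<gamma> * real n - real m + (\<beta> - \<delta>) / \<gamma>)) \<longlongrightarrow> 0)
           (sequentially \<times>\<^sub>F sequentially)"
proof -
  let ?ex = "\<lambda>n. x n - (\<alpha> * real n + \<beta>)" and ?ey = "\<lambda>m. y m - (\<gamma> * real m + \<delta>)"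
  have "((\<lambda>p. (?ex (fst p) - ?ey (snd p)) / \<gamma>) \<longlongrightarrow> (0 - 0) / \<gamma>) (sequentially \<times>\<^sub>F sequentially)"
    using x y unfolding perturbed_AP_def
    by (intro tendsto_divide tendsto_diff tendsto_const filterlim_compose[OF _ filterlim_fst]
          filterlim_compose[OF _ filterlim_snd]) (use \<open>\<gamma> \<noteq> 0\<close> in auto)
  moreover have "(\<lambda>p. (?ex (fst p) - ?ey (snd p)) / \<gamma>) =
      (\<lambda>(n, m). (x n - y m) / \<gamma> - (\<alpha> / \<gamma> * real n - real m + (\<beta> - \<delta>) / \<gamma>))"
    using \<open>\<gamma> \<noteq> 0\<close> by (auto simp: field_simps)
  ultimately show ?thesis by simp
qed

lemma frequently_irrational_multiple_near:
  fixes \<theta> :: real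
  assumes "\<theta> \<notin> \<rat>" "\<theta> > 0" "r > 0"
  shows "\<exists>\<^sub>F (n, m) in sequentially \<times>\<^sub>F sequentially. \<bar>\<theta> * real n - real m - w\<bar> < r"
proof -
  have "\<exists>n\<ge>N. \<exists>m\<ge>N. \<bar>\<theta> * real n - real m - w\<bar> < r" for N :: nat
  proof -
    obtain M0 :: nat where "(real N + \<bar>w\<bar> + r) / \<theta> < real M0"
      using reals_Archimedean2 by blast
    then have M0: "real N + \<bar>w\<bar> + r < \<theta> * real M0"
      using \<open>\<theta> > 0\<close> by (simp add: field_simps)
    define M where "M = max N M0"
    have "\<theta> * real M0 \<le> \<theta> * real M"
      using \<open>\<theta> > 0\<close> by (simp add: M_def)
    obtain h k :: int where "k > 0" and hk: "\<bar>of_int k * \<theta> - of_int h - (w - \<theta> * real M)\<bar> < r"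
      using sequence_of_fractional_parts_is_dense[OF assms(1,3)] by metis
    define n where "n = nat k + M"
    have n: "\<theta> * real n = of_int k * \<theta> + \<theta> * real M"
      using \<open>k > 0\<close> by (simp add: n_def algebra_simps)
    with hk have near: "\<bar>\<theta> * real n - of_int h - w\<bar> < r" by simp
    have "0 \<le> of_int k * \<theta>" using \<open>k > 0\<close> \<open>\<theta> > 0\<close> by simp
    with near n M0 \<open>\<theta> * real M0 \<le> \<theta> * real M\<close> have "real N < of_int h"
      unfolding abs_less_iff by linarith
    then have "N \<le> nat h" "real (nat h) = of_int h" by linarith+
    moreover have "N \<le> n" by (simp add: n_def M_def)
    ultimately show ?thesis using near by metis
  qed
  then show ?thesis
    unfolding frequently_def eventually_prod_sequentially by (metis (mono_tags, lifting) case_prod_conv)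
qed

lemma affine_eventually_bounded_away:
  fixes \<theta> c :: real
  assumes "(\<theta>, c) \<noteq> (0, 0)"
  obtains \<sigma> d where "\<bar>\<sigma>\<bar> = 1" "d > 0" "\<forall>\<^sub>F n in sequentially. d \<le> \<sigma> * (\<theta> * real n + c)"
proof (cases "\<theta> = 0")
  case True
  with assms have "c \<noteq> 0" by simp
  then show thesis
    using True by (intro that[of "sgn c" "\<bar>c\<bar>"] always_eventually allI) (auto simp: sgn_if)
next
  case False
  have "\<forall>\<^sub>F n in sequentially. (1 + \<bar>c\<bar>) / \<bar>\<theta>\<bar> \<le> real n"
    using filterlim_real_sequentially by (simp add: filterlim_at_top)
  then have "\<forall>\<^sub>F n in sequentially. 1 \<le> sgn \<theta> * (\<theta> * real n + c)"
  proof (rule eventually_mono)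
    fix n assume "(1 + \<bar>c\<bar>) / \<bar>\<theta>\<bar> \<le> real n"
    then have "1 + \<bar>c\<bar> \<le> \<bar>\<theta>\<bar> * real n" using False by (simp add: field_simps)
    moreover have "sgn \<theta> * (\<theta> * real n + c) = \<bar>\<theta>\<bar> * real n + sgn \<theta> * c"
      by (simp add: algebra_simps abs_sgn)
    moreover have "- \<bar>c\<bar> \<le> sgn \<theta> * c" using False by (auto simp: sgn_if)
    ultimately show "1 \<le> sgn \<theta> * (\<theta> * real n + c)" by linarith
  qed
  moreover have "\<bar>sgn \<theta>\<bar> = 1" using False by (simp add: abs_sgn_eq)
  ultimately show thesis by (intro that) auto
qed

lemma sign_agreement_rigidity:
  fixes D D' :: "nat \<Rightarrow> nat \<Rightarrow> real" and \<theta> \<theta>' c c' :: real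
  assumes "\<theta> \<notin> \<rat>" "\<theta> > 0"
    and D: "((\<lambda>(n, m). D n m - (\<theta> * real n - real m + c)) \<longlongrightarrow> 0) (sequentially \<times>\<^sub>F sequentially)"
    and D': "((\<lambda>(n, m). D' n m - (\<theta>' * real n - real m + c')) \<longlongrightarrow> 0) (sequentially \<times>\<^sub>F sequentially)"
    and sign: "\<forall>\<^sub>F (n, m) in sequentially \<times>\<^sub>F sequentially. 0 \<le> D n m * D' n m"
  shows "\<theta>' = \<theta> \<and> c' = c"
proof (rule ccontr)
  assume "\<not> (\<theta>' = \<theta> \<and> c' = c)"
  then have "(\<theta>' - \<theta>, c' - c) \<noteq> (0, 0)" by simp
  then obtain \<sigma> d where \<sigma>: "\<bar>\<sigma>\<bar> = 1" and "d > 0"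
    and gap: "\<forall>\<^sub>F n in sequentially. d \<le> \<sigma> * ((\<theta>' - \<theta>) * real n + (c' - c))"
    by (rule affine_eventually_bounded_away)
  then have d4: "d / 4 > 0" by simp
  txt \<open>Place \<theta> n - m + c near -\<sigma> d / 2: then D has sign -\<sigma>, while D' differs from D by
    (\<theta>' - \<theta>) n + (c' - c) + o(1), which has sign \<sigma> and size at least d.\<close>
  have ev: "\<forall>\<^sub>F (n, m) in sequentially \<times>\<^sub>F sequentially.
      \<bar>D n m - (\<theta> * real n - real m + c)\<bar> < d / 4 \<and> \<bar>D' n m - (\<theta>' * real n - real m + c')\<bar> < d / 4 \<and>
      d \<le> \<sigma> * ((\<theta>' - \<theta>) * real n + (c' - c)) \<and> 0 \<le> D n m * D' n m"
    using tendstoD[OF D d4] tendstoD[OF D' d4] sign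
      eventually_prod1[OF trivial_limit_sequentially, THEN iffD2, OF gap]
    by eventually_elim (auto simp: dist_real_def)
  have freq: "\<exists>\<^sub>F (n, m) in sequentially \<times>\<^sub>F sequentially.
      \<bar>\<theta> * real n - real m - (- c - \<sigma> * d / 2)\<bar> < d / 4"
    by (rule frequently_irrational_multiple_near[OF assms(1,2) d4])
  obtain n m where
    near: "\<bar>D n m - (\<theta> * real n - real m + c)\<bar> < d / 4" "\<bar>D' n m - (\<theta>' * real n - real m + c')\<bar> < d / 4"
      "\<bar>\<theta> * real n - real m - (- c - \<sigma> * d / 2)\<bar> < d / 4"
    and "d \<le> \<sigma> * ((\<theta>' - \<theta>) * real n + (c' - c))" "0 \<le> D n m * D' n m"
    using frequently_ex[OF frequently_eventually_frequently[OF freq ev]] by auto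
  from \<sigma> consider "\<sigma> = 1" | "\<sigma> = -1" by linarith
  then have "D n m * D' n m < 0"
  proof cases
    case 1
    then have "D n m < 0" "D' n m > 0"
      using near \<open>d \<le> _\<close> unfolding abs_less_iff by (simp_all add: algebra_simps)
    then show ?thesis by (rule mult_neg_pos)
  next
    case 2
    then have "D n m > 0" "D' n m < 0"
      using near \<open>d \<le> _\<close> unfolding abs_less_iff by (simp_all add: algebra_simps)
    then show ?thesis by (rule mult_pos_neg)
  qed
  with \<open>0 \<le> D n m * D' n m\<close> show False by simp
qed

lemma strict_mono_on_maps_succ_is_next:
  fixes h :: "'a::linorder \<Rightarrow> 'b::linorder"
  assumes h: "strict_mono_on A h" and img: "h ` (A \<inter> range x) = B \<inter> range x'"
    and A: "x n \<in> A" "x (Suc n) \<in> A" and B: "x' (Suc k) \<in> B"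
    and next_x: "succ_is_next x n" and next_x': "succ_is_next x' k"
    and match: "h (x n) = x' k"
  shows "h (x (Suc n)) = x' (Suc k)"
proof (rule antisym)
  have "x' (Suc k) \<in> h ` (A \<inter> range x)" using B img by auto
  then obtain m where m: "x m \<in> A" "h (x m) = x' (Suc k)" by auto
  have "h (x n) < h (x m)" using match m next_x' by (simp add: succ_is_next_def)
  then have "x n < x m" using strict_mono_on_less[OF h A(1) m(1)] by simp
  then have "x (Suc n) \<le> x m" using next_x by (simp add: succ_is_next_def)
  then show "h (x (Suc n)) \<le> x' (Suc k)"
    using strict_mono_on_leD[OF h A(2) m(1)] m(2) by simp
next
  obtain k' where k': "h (x (Suc n)) = x' k'"
    using A(2) img by blast
  have "h (x n) < h (x (Suc n))"
    using next_x strict_mono_on_less[OF h A] by (simp add: succ_is_next_def)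
  then show "x' (Suc k) \<le> h (x (Suc n))"
    using match k' next_x' by (simp add: succ_is_next_def)
qed

lemma mono_on_onto_ray_tendsto_at_top:
  fixes h :: "real \<Rightarrow> real"
  assumes mono: "mono_on {a<..} h" and onto: "h ` {a<..} = {b<..}"
  shows "filterlim h at_top at_top"
  unfolding filterlim_at_top
proof
  fix C
  have "max C b + 1 \<in> h ` {a<..}" using onto by simp
  then obtain s where s: "a < s" "h s = max C b + 1" by auto
  show "\<forall>\<^sub>F t in at_top. C \<le> h t"
    using eventually_gt_at_top[of s]
  proof (rule eventually_mono)
    fix t assume "s < t"
    then have "h s \<le> h t" using s(1) by (intro mono_onD[OF mono]) auto
    with s(2) show "C \<le> h t" by linarith
  qed
qed

lemma strict_mono_on_ray_matches_tails:
  fixes h :: "real \<Rightarrow> real" and x x' :: "nat \<Rightarrow> real"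
  assumes h: "strict_mono_on {a<..} h" "filterlim h at_top at_top"
    and img: "h ` ({a<..} \<inter> range x) = {b<..} \<inter> range x'"
    and x: "filterlim x at_top sequentially" "\<forall>\<^sub>F n in sequentially. succ_is_next x n"
    and x': "\<forall>\<^sub>F n in sequentially. succ_is_next x' n"
  obtains i j where "\<And>t. a < x (i + t) \<and> h (x (i + t)) = x' (j + t)"
proof -
  obtain C where C: "\<And>k. C < x' k \<Longrightarrow> succ_is_next x' k"
    using eventually_sequentially_imp_above[OF x', where x = x'] by metis
  have "\<forall>\<^sub>F n in sequentially. a < x n \<and> C < h (x n) \<and> succ_is_next x n"
    using x filterlim_compose[OF h(2) x(1)] by (intro eventually_conj) (auto simp: filterlim_at_top_dense)
  then obtain i where "\<And>n. i \<le> n \<Longrightarrow> a < x n \<and> C < h (x n) \<and> succ_is_next x n"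
    unfolding eventually_sequentially by blast
  then have i: "a < x (i + t) \<and> C < h (x (i + t)) \<and> succ_is_next x (i + t)" for t
    by simp
  have "h (x i) \<in> {b<..} \<inter> range x'" using img i[of 0] by auto
  then obtain j where j: "h (x i) = x' j" by auto
  have "h (x (i + t)) = x' (j + t)" for t
  proof (induction t)
    case 0
    with j show ?case by simp
  next
    case (Suc t)
    have "h (x (i + t)) \<in> {b<..}" using i[of t] img by blast
    moreover have "succ_is_next x' (j + t)" using C i[of t] Suc by simp
    ultimately have "x' (Suc (j + t)) \<in> {b<..}" using Suc by (simp add: succ_is_next_def)
    with Suc i[of t] i[of "Suc t"] \<open>succ_is_next x' (j + t)\<close> show ?case
      using strict_mono_on_maps_succ_is_next[OF h(1) img] by simp
  qed
  with i show thesis by (intro that) auto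
qed

lemma not_strict_antimono_on_ray:
  fixes h :: "real \<Rightarrow> real" and x x' :: "nat \<Rightarrow> real"
  assumes h: "strict_antimono_on {a<..} h" and img: "h ` ({a<..} \<inter> range x) \<subseteq> range x'"
    and x: "filterlim x at_top sequentially" and x': "filterlim x' at_top sequentially"
  shows False
proof -
  define T where "T = {a + 1<..} \<inter> range x"
  have "h ` T \<subseteq> x' ` {k. x' k < h (a + 1)}"
  proof
    fix z assume "z \<in> h ` T"
    then obtain t where t: "t \<in> T" "z = h t" by blast
    then have "h t < h (a + 1)" using h by (auto simp: T_def intro: monotone_onD)
    moreover have "h t \<in> range x'" using t img by (auto simp: T_def)
    ultimately show "z \<in> x' ` {k. x' k < h (a + 1)}" using t(2) by auto
  qed
  moreover have "finite {k. x' k < h (a + 1)}"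
    using x' unfolding filterlim_at_top cofinite_eq_sequentially[symmetric] eventually_cofinite
    by (simp add: not_le)
  moreover have "inj_on h T"
    using h by (auto simp: strict_antimono_iff_antimono T_def intro: inj_on_subset)
  ultimately have "finite T"
    by (metis finite_imageD finite_imageI finite_subset)
  have "\<forall>\<^sub>F n in sequentially. Max (insert (a + 1) T) < x n"
    using x by (simp add: filterlim_at_top_dense)
  then obtain n where "Max (insert (a + 1) T) < x n"
    using eventually_happens'[OF trivial_limit_sequentially] by blast
  moreover from this \<open>finite T\<close> have "x n \<in> T" by (simp add: T_def)
  ultimately show False using \<open>finite T\<close> by (simp add: leD)
qed

lemma mono_on_diff_mult_nonneg:
  fixes h :: "'a::linordered_idom \<Rightarrow> 'a"
  assumes h: "mono_on A h" and "u \<in> A" "v \<in> A"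
  shows "0 \<le> (u - v) * (h u - h v)"
proof (cases "u \<le> v")
  case True
  with mono_onD[OF h \<open>u \<in> A\<close> \<open>v \<in> A\<close>] show ?thesis
    by (intro mult_nonpos_nonpos) simp_all
next
  case False
  with mono_onD[OF h \<open>v \<in> A\<close> \<open>u \<in> A\<close>] show ?thesis
    by (intro mult_nonneg_nonneg) simp_all
qed

lemma top_equiv_at_top_matches_tails:
  assumes x: "perturbed_AP x \<alpha> \<beta>" "\<alpha> > 0" and y: "perturbed_AP y \<gamma> \<delta>" "\<gamma> > 0"
    and x': "perturbed_AP x' \<alpha>' \<beta>'" "\<alpha>' > 0" and y': "perturbed_AP y' \<gamma>' \<delta>'" "\<gamma>' > 0"
    and "top_equiv_at_top x y x' y'"
  obtains a h i j k l where "mono_on {a<..} h"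
    "\<And>t. a < x (i + t) \<and> h (x (i + t)) = x' (j + t)"
    "\<And>t. a < y (k + t) \<and> h (y (k + t)) = y' (l + t)"
proof -
  obtain a b h g where hom: "homeomorphism {a<..} {b<..} h g"
    and img_x: "h ` ({a<..} \<inter> range x) = {b<..} \<inter> range x'"
    and img_y: "h ` ({a<..} \<inter> range y) = {b<..} \<inter> range y'"
    using assms(9) unfolding top_equiv_at_top_def by (elim exE conjE)
  have onto: "h ` {a<..} = {b<..}" and "continuous_on {a<..} h" "inj_on h {a<..}"
    using hom unfolding homeomorphism_def by (auto intro: inj_on_inverseI)
  then have "strict_mono_on {a<..} h \<or> strict_antimono_on {a<..} h"
    using injective_eq_monotone_map[OF is_interval_oi] by simp
  moreover have "\<not> strict_antimono_on {a<..} h"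
  proof
    assume "strict_antimono_on {a<..} h"
    moreover have "h ` ({a<..} \<inter> range x) \<subseteq> range x'" using img_x by simp
    ultimately show False
      using not_strict_antimono_on_ray perturbed_AP_tendsto_at_top[OF x]
        perturbed_AP_tendsto_at_top[OF x'] by metis
  qed
  ultimately have mono: "strict_mono_on {a<..} h" by simp
  then have h_top: "filterlim h at_top at_top"
    using onto by (intro mono_on_onto_ray_tendsto_at_top strict_mono_on_imp_mono_on)
  obtain i j where x_x': "\<And>t. a < x (i + t) \<and> h (x (i + t)) = x' (j + t)"
    using strict_mono_on_ray_matches_tails[OF mono h_top img_x perturbed_AP_tendsto_at_top[OF x]
        perturbed_AP_eventually_succ_is_next[OF x] perturbed_AP_eventually_succ_is_next[OF x']]
    by blast
  obtain k l where y_y': "\<And>t. a < y (k + t) \<and> h (y (k + t)) = y' (l + t)"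
    using strict_mono_on_ray_matches_tails[OF mono h_top img_y perturbed_AP_tendsto_at_top[OF y]
        perturbed_AP_eventually_succ_is_next[OF y] perturbed_AP_eventually_succ_is_next[OF y']]
    by blast
  show thesis
    by (rule that[OF strict_mono_on_imp_mono_on[OF mono] x_x' y_y'])
qed

lemma mono_on_matching_determines_density_and_offset:
  assumes x: "perturbed_AP x \<alpha> \<beta>" and y: "perturbed_AP y \<gamma> \<delta>"
    and x': "perturbed_AP x' \<alpha>' \<beta>'" and y': "perturbed_AP y' \<gamma>' \<delta>'"
    and "\<gamma> > 0" "\<gamma>' > 0" "\<alpha> / \<gamma> \<notin> \<rat>" "\<alpha> / \<gamma> > 0"
    and mono: "mono_on A h"
    and x_x': "\<And>t. x (i + t) \<in> A \<and> h (x (i + t)) = x' (j + t)"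
    and y_y': "\<And>t. y (k + t) \<in> A \<and> h (y (k + t)) = y' (l + t)"
  shows "\<alpha>' / \<gamma>' = \<alpha> / \<gamma> \<and>
    (\<alpha>' * real j + \<beta>' - (\<gamma>' * real l + \<delta>')) / \<gamma>' = (\<alpha> * real i + \<beta> - (\<gamma> * real k + \<delta>)) / \<gamma>"
proof (rule sign_agreement_rigidity[OF \<open>\<alpha> / \<gamma> \<notin> \<rat>\<close> \<open>\<alpha> / \<gamma> > 0\<close>])
  show "((\<lambda>(n, m). (x (i + n) - y (k + m)) / \<gamma> -
      (\<alpha> / \<gamma> * real n - real m + (\<alpha> * real i + \<beta> - (\<gamma> * real k + \<delta>)) / \<gamma>)) \<longlongrightarrow> 0)
      (sequentially \<times>\<^sub>F sequentially)"
    using \<open>\<gamma> > 0\<close> x y by (intro perturbed_AP_difference_tendsto perturbed_AP_shift) simp_all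
  show "((\<lambda>(n, m). (x' (j + n) - y' (l + m)) / \<gamma>' -
      (\<alpha>' / \<gamma>' * real n - real m + (\<alpha>' * real j + \<beta>' - (\<gamma>' * real l + \<delta>')) / \<gamma>')) \<longlongrightarrow> 0)
      (sequentially \<times>\<^sub>F sequentially)"
    using \<open>\<gamma>' > 0\<close> x' y' by (intro perturbed_AP_difference_tendsto perturbed_AP_shift) simp_all
  have "0 \<le> (x (i + n) - y (k + m)) * (x' (j + n) - y' (l + m))" for n m
    using mono_on_diff_mult_nonneg[OF mono, of "x (i + n)" "y (k + m)"] x_x'[of n] y_y'[of m] by simp
  then show "\<forall>\<^sub>F (n, m) in sequentially \<times>\<^sub>F sequentially.
      0 \<le> (x (i + n) - y (k + m)) / \<gamma> * ((x' (j + n) - y' (l + m)) / \<gamma>')"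
    using \<open>\<gamma> > 0\<close> \<open>\<gamma>' > 0\<close> by (intro always_eventually) (auto intro: divide_nonneg_pos)
qed

theorem lemma7:
  fixes x y x' y' :: "nat \<Rightarrow> real"
    and \<alpha> \<beta> \<gamma> \<delta> \<alpha>' \<beta>' \<gamma>' \<delta>' :: real
  assumes "\<alpha> > 0" "\<gamma> > 0" "\<alpha>' > 0" "\<gamma>' > 0"
    and "perturbed_AP x \<alpha> \<beta>" "perturbed_AP y \<gamma> \<delta>"
    and "perturbed_AP x' \<alpha>' \<beta>'" "perturbed_AP y' \<gamma>' \<delta>'"
    and "\<alpha> / \<gamma> \<notin> \<rat>" "\<alpha>' / \<gamma>' \<notin> \<rat>"
    and "top_equiv_at_top x y x' y'"
  shows "\<alpha> / \<gamma> = \<alpha>' / \<gamma>' \<and>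
         (\<beta> - \<delta>) / \<gamma> - (\<beta>' - \<delta>') / \<gamma>' \<in> subgroup_gen_1 (\<alpha> / \<gamma>)"
proof -
  obtain a h i j k l where mono: "mono_on {a<..} h"
    and x_x': "\<And>t. a < x (i + t) \<and> h (x (i + t)) = x' (j + t)"
    and y_y': "\<And>t. a < y (k + t) \<and> h (y (k + t)) = y' (l + t)"
    using top_equiv_at_top_matches_tails[OF assms(5,1,6,2,7,3,8,4,11)] by blast
  have "\<alpha> / \<gamma> > 0" using assms(1,2) by simp
  have same: "\<alpha>' / \<gamma>' = \<alpha> / \<gamma>"
    and offset: "(\<alpha>' * real j + \<beta>' - (\<gamma>' * real l + \<delta>')) / \<gamma>' = (\<alpha> * real i + \<beta> - (\<gamma> * real k + \<delta>)) / \<gamma>"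
    using mono_on_matching_determines_density_and_offset[OF assms(5-8,2,4,9) \<open>\<alpha> / \<gamma> > 0\<close> mono]
      x_x' y_y' by auto
  have "(\<alpha> * real i + \<beta> - (\<gamma> * real k + \<delta>)) / \<gamma> = \<alpha> / \<gamma> * real i + (\<beta> - \<delta>) / \<gamma> - real k"
    "(\<alpha>' * real j + \<beta>' - (\<gamma>' * real l + \<delta>')) / \<gamma>' = \<alpha>' / \<gamma>' * real j + (\<beta>' - \<delta>') / \<gamma>' - real l"
    using assms(2,4) by (simp_all add: field_simps)
  with offset have "(\<beta> - \<delta>) / \<gamma> - (\<beta>' - \<delta>') / \<gamma>' = (real k - real l) + \<alpha> / \<gamma> * (real j - real i)"
    unfolding same right_diff_distrib by linarith
  then have "(\<beta> - \<delta>) / \<gamma> - (\<beta>' - \<delta>') / \<gamma>' \<in> subgroup_gen_1 (\<alpha> / \<gamma>)"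
    unfolding subgroup_gen_1_def
    by (intro CollectI exI[of _ "int k - int l"] exI[of _ "int j - int i"]) (simp add: mult.commute)
  with same show ?thesis by simp
qed

end
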